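(* Let $h(x,t)=\phi(x,x_{cl}(t))\chi_{(-x_{cl}(t),x_{cl}(t))}(x)$ be a moving-contact-line solution with $\dot x_{cl}(t)\neq0$, such that $\int_{\mathbb{R}}h(x,t)\,\mathrm{d}x$ is constant in time and, on the interval $(-x_{cl}(t),x_{cl}(t))$, the equation $$\dot x_{cl}\,\frac{\partial\phi}{\partial s}(x,x_{cl})+\frac{\partial}{\partial x}\Big(\phi(x,x_{cl})\,m(\bar h)\,\partial_{xxx}\bar h\Big)=0$$ holds classically, with $\phi(\cdot,x_{cl})\,m(\bar h)\partial_{xxx}\bar h$ extending continuously to $[-x_{cl},x_{cl}]$. If $\phi(x_{cl}(t),x_{cl}(t))\neq0$, then $$\dot x_{cl}(t)=\Big[m(\bar h)\,\partial_{xxx}\bar h\Big]_{x=x_{cl}(t)} .$$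
   Context: Fix $\alpha,\gamma,\mu>0$. $K_2(x)=\frac{1}{4\alpha^2}(\alpha+|x|)e^{-|x|/\alpha}$ is the bi-Helmholtz kernel, $\bar h=K_2*h$, and $m(s)=\frac{\gamma}{3\mu}s^2$. A moving-contact-line solution has the form $h(x,t)=\phi(x,x_{cl}(t))\chi_{(-x_{cl},x_{cl})}(x)$ with $x_{cl}(t)>0$ differentiable, $\phi(x,s)$ continuously differentiable in $(x,s)$ for $|x|\le s$, smooth in $x$, and even in $x$; $\partial\phi/\partial s$ is the derivative in the second argument; $\chi_A$ is the indicator function of $A$. *)

theory Defs
  imports "HOL-Analysis.Analysis"
begin

definition K2 :: "real \<Rightarrow> real \<Rightarrow> real" where
  "K2 \<alpha> x = (\<alpha> + \<bar>x\<bar>) * exp (- \<bar>x\<bar> / \<alpha>) / (4 * \<alpha>\<^sup>2)"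

definition mob :: "real \<Rightarrow> real \<Rightarrow> real \<Rightarrow> real" where
  "mob \<gamma> \<mu> s = \<gamma> / (3 * \<mu>) * s\<^sup>2"

definition hcl :: "(real \<Rightarrow> real \<Rightarrow> real) \<Rightarrow> (real \<Rightarrow> real) \<Rightarrow> real \<Rightarrow> real \<Rightarrow> real" where
  "hcl \<phi> xcl x t = \<phi> x (xcl t) * indicator {- xcl t <..< xcl t} x"

definition hbar :: "real \<Rightarrow> (real \<Rightarrow> real \<Rightarrow> real) \<Rightarrow> real \<Rightarrow> real \<Rightarrow> real" where
  "hbar \<alpha> h x t = integral UNIV (\<lambda>y. K2 \<alpha> (x - y) * h y t)"

definition d3 :: "(real \<Rightarrow> real) \<Rightarrow> real \<Rightarrow> real" where
  "d3 f x = deriv (deriv (deriv f)) x"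

definition cl_dom :: "(real \<times> real) set" where
  "cl_dom = {(x, s). 0 < s \<and> \<bar>x\<bar> \<le> s}"

end

theory Submission
  imports Defs
begin

(* Integrating the equation over (-x_cl, x_cl) gives F(x_cl) - F(-x_cl) = -x_cl' \<integral> \<partial>\<^sub>s\<phi>(x, x_cl) dx
   for the flux F = \<phi> m(h\<^sub>b) \<partial>\<^sub>x\<^sub>x\<^sub>x h\<^sub>b.  Evenness of \<phi> makes h\<^sub>b = K2 * h even and its third
   derivative odd, so the left side is 2 F(x_cl).  Differentiating the conserved mass, the
   integral of \<phi>(x, x_cl) over (-x_cl, x_cl), along the motion (Reynolds transport) gives
   x_cl' (2 \<phi>(x_cl, x_cl) + \<integral> \<partial>\<^sub>s\<phi>) = 0, hence \<integral> \<partial>\<^sub>s\<phi> = -2 \<phi>(x_cl, x_cl) as x_cl' \<noteq> 0.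
   So F(x_cl) = x_cl' \<phi>(x_cl, x_cl), and \<phi>(x_cl, x_cl) \<noteq> 0 can be cancelled.
   The flux is continuous on the closed interval because K2'' = (K2 - K1) / \<alpha>\<^sup>2 with the Helmholtz
   kernel K1, whose convolution with a continuous density is C\<^sup>1. *)

lemma has_real_derivative_if_continuous_off_finite:
  fixes g g' :: "real \<Rightarrow> real"
  assumes "finite S" and g: "continuous_on UNIV g" and g': "continuous_on UNIV g'"
    and deriv: "\<And>x. x \<notin> S \<Longrightarrow> (g has_real_derivative g' x) (at x)"
  shows "(g has_real_derivative g' x) (at x)"
proof -
  have g_eq: "g y = g (x - 1) + integral {x - 1..y} g'" if "y \<in> {x - 1<..<x + 1}" for y
  proof -
    have "(g' has_integral (g y - g (x - 1))) {x - 1..y}"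
      using that deriv \<open>finite S\<close> continuous_on_subset[OF g]
      by (intro fundamental_theorem_of_calculus_interior_strong[of S])
         (auto simp: has_real_derivative_iff_has_vector_derivative)
    then show ?thesis by (simp add: integral_unique)
  qed
  have "((\<lambda>u. integral {x - 1..u} g') has_vector_derivative g' x) (at x within {x - 1..x + 1})"
    by (rule integral_has_vector_derivative) (auto intro: continuous_on_subset[OF g'])
  then have "((\<lambda>u. g (x - 1) + integral {x - 1..u} g') has_real_derivative g' x) (at x)"
    by (auto simp: at_within_Icc_at has_real_derivative_iff_has_vector_derivative
             intro!: derivative_eq_intros)
  then show ?thesis
    by (rule has_field_derivative_transform_within_open[where S="{x - 1<..<x + 1}"]) (auto simp: g_eq)
qed

lemma abs_has_real_derivative:
  assumes "(x::real) \<noteq> 0"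
  shows "(abs has_real_derivative sgn x) (at x)"
proof (cases "x > 0")
  case True
  have "((\<lambda>y. y) has_real_derivative 1) (at x)" by (rule DERIV_ident)
  then have "(abs has_real_derivative 1) (at x)"
    by (rule has_field_derivative_transform_within_open[where S="{0<..}"]) (use True in auto)
  then show ?thesis using True by simp
next
  case False
  with assms have "x < 0" by simp
  have "((\<lambda>y. - y) has_real_derivative -1) (at x)" by (rule derivative_eq_intros refl)+
  then have "(abs has_real_derivative -1) (at x)"
    by (rule has_field_derivative_transform_within_open[where S="{..<0}"]) (use \<open>x < 0\<close> in auto)
  then show ?thesis using \<open>x < 0\<close> by simp
qed

definition K1 :: "real \<Rightarrow> real \<Rightarrow> real" where
  "K1 a z = exp (- \<bar>z\<bar> / a) / (2 * a)"

definition K2_deriv :: "real \<Rightarrow> real \<Rightarrow> real" where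
  "K2_deriv a z = - z * exp (- \<bar>z\<bar> / a) / (4 * a ^ 3)"

lemma continuous_on_K1: "a > 0 \<Longrightarrow> continuous_on UNIV (K1 a)"
  unfolding K1_def by (intro continuous_intros) auto

lemma continuous_on_K2: "a > 0 \<Longrightarrow> continuous_on UNIV (K2 a)"
  unfolding K2_def by (intro continuous_intros) auto

lemma continuous_on_K2_deriv: "a > 0 \<Longrightarrow> continuous_on UNIV (K2_deriv a)"
  unfolding K2_deriv_def by (intro continuous_intros) auto

lemma K2_has_real_derivative:
  assumes a: "a > 0"
  shows "(K2 a has_real_derivative K2_deriv a z) (at z)"
proof (rule has_real_derivative_if_continuous_off_finite[of "{0}"])
  fix x :: real assume "x \<notin> {0}"
  then have "(abs has_real_derivative sgn x) (at x)" by (intro abs_has_real_derivative) simp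
  moreover have "sgn x * \<bar>x\<bar> = x" by (simp add: sgn_mult_abs)
  ultimately show "(K2 a has_real_derivative K2_deriv a x) (at x)"
    unfolding K2_def[abs_def] K2_deriv_def using a
    by (auto intro!: derivative_eq_intros simp: field_simps power2_eq_square eval_nat_numeral)
qed (use a continuous_on_K2 continuous_on_K2_deriv in auto)

(* K2 and K1 are the Green functions of (1 - a\<^sup>2 \<partial>\<^sup>2)\<^sup>2 and 1 - a\<^sup>2 \<partial>\<^sup>2. *)
lemma K2_deriv_has_real_derivative:
  assumes a: "a > 0"
  shows "(K2_deriv a has_real_derivative (K2 a z - K1 a z) / a\<^sup>2) (at z)"
proof (rule has_real_derivative_if_continuous_off_finite[of "{0}"])
  fix x :: real assume "x \<notin> {0}"
  then have "(abs has_real_derivative sgn x) (at x)" by (intro abs_has_real_derivative) simp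
  moreover have "x * sgn x = \<bar>x\<bar>" by (simp add: abs_sgn)
  ultimately show "(K2_deriv a has_real_derivative (K2 a x - K1 a x) / a\<^sup>2) (at x)"
    unfolding K2_deriv_def[abs_def] K2_def K1_def using a
    by (auto intro!: derivative_eq_intros simp: field_simps power2_eq_square eval_nat_numeral)
qed (use a continuous_on_K1 continuous_on_K2 continuous_on_K2_deriv in \<open>auto intro!: continuous_intros\<close>)

lemma convolution_has_real_derivative:
  fixes k k' f :: "real \<Rightarrow> real"
  assumes k: "continuous_on UNIV k" and k': "continuous_on UNIV k'"
    and deriv: "\<And>z. (k has_real_derivative k' z) (at z)"
    and f: "continuous_on {a..b} f"
  shows "((\<lambda>x. integral {a..b} (\<lambda>y. k (x - y) * f y)) has_real_derivative
           integral {a..b} (\<lambda>y. k' (x - y) * f y)) (at x)"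
proof -
  have "((\<lambda>x. integral (cbox a b) (\<lambda>y. k (x - y) * f y)) has_field_derivative
           integral (cbox a b) (\<lambda>y. k' (x - y) * f y)) (at x within UNIV)"
  proof (rule leibniz_rule_field_derivative)
    fix x y :: real
    have "((\<lambda>x. k (x - y)) has_real_derivative k' (x - y) * 1) (at x)"
      by (rule DERIV_chain2[OF deriv]) (auto intro!: derivative_eq_intros)
    then show "((\<lambda>x. k (x - y) * f y) has_field_derivative k' (x - y) * f y) (at x within UNIV)"
      using DERIV_cmult_right by fastforce
  next
    fix x :: real
    show "(\<lambda>y. k (x - y) * f y) integrable_on cbox a b"
      unfolding cbox_interval
      by (intro integrable_continuous_real continuous_intros continuous_on_compose2[OF k] f) auto
  next
    have "continuous_on (UNIV \<times> cbox a b) (\<lambda>p. k' (fst p - snd p) * f (snd p))"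
      unfolding cbox_interval
      by (intro continuous_intros continuous_on_compose2[OF k'] continuous_on_compose2[OF f]) auto
    then show "continuous_on (UNIV \<times> cbox a b) (\<lambda>(x, y). k' (x - y) * f y)"
      by (simp add: case_prod_beta)
  qed auto
  then show ?thesis by (simp add: cbox_interval)
qed

lemma convolution_even:
  fixes k f :: "real \<Rightarrow> real"
  assumes k: "\<And>z. k (- z) = k z" and f: "\<And>y. y \<in> {-s..s} \<Longrightarrow> f (- y) = f y"
  shows "integral {-s..s} (\<lambda>y. k (- x - y) * f y) = integral {-s..s} (\<lambda>y. k (x - y) * f y)"
proof -
  have "integral {-s..s} (\<lambda>y. k (- x - y) * f y) = integral {-s..s} (\<lambda>y. k (y - x) * f (- y))"
    using Henstock_Kurzweil_Integration.integral_reflect_real[of s "-s" "\<lambda>y. k (- x - y) * f y"] by simp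
  also have "\<dots> = integral {-s..s} (\<lambda>y. k (x - y) * f y)"
    using k[of "y - x" for y] f by (intro integral_cong) auto
  finally show ?thesis .
qed

lemma derivative_odd_if_even:
  fixes g g' :: "real \<Rightarrow> real"
  assumes even: "\<And>x. g (- x) = g x" and deriv: "\<And>x. (g has_real_derivative g' x) (at x)"
  shows "g' (- x) = - g' x"
proof -
  have "((\<lambda>y. g (- y)) has_real_derivative g' (- x) * (-1)) (at x)"
    by (rule DERIV_chain2[OF deriv]) (auto intro!: derivative_eq_intros)
  then have "(g has_real_derivative - g' (- x)) (at x)" using even by simp
  from DERIV_unique[OF this deriv] show ?thesis by simp
qed

lemma derivative_even_if_odd:
  fixes g g' :: "real \<Rightarrow> real"
  assumes odd: "\<And>x. g (- x) = - g x" and deriv: "\<And>x. (g has_real_derivative g' x) (at x)"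
  shows "g' (- x) = g' x"
proof -
  have "((\<lambda>y. - g (- y)) has_real_derivative - (g' (- x) * (-1))) (at x)"
    by (intro DERIV_minus DERIV_chain2[OF deriv]) (auto intro!: derivative_eq_intros)
  then have "(g has_real_derivative g' (- x)) (at x)" using odd by simp
  from DERIV_unique[OF this deriv] show ?thesis by simp
qed

lemma d3_eq_if_derivatives:
  assumes "\<And>x. (g has_real_derivative g1 x) (at x)" "\<And>x. (g1 has_real_derivative g2 x) (at x)"
    and "\<And>x. (g2 has_real_derivative g3 x) (at x)"
  shows "d3 g = g3"
  using assms unfolding d3_def by (metis DERIV_imp_deriv ext)

lemma clamp_real: "clamp a b (x::real) = max a (min x b)"
  unfolding clamp_def by (simp add: max_def min_def)

lemma clamp_in_Icc: "(a::real) \<le> b \<Longrightarrow> clamp a b x \<in> {a..b}"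
  using clamp_in_interval[of a b x] by simp

lemma continuous_on_integral_to_clamp:
  fixes g :: "real \<Rightarrow> real"
  assumes "s > 0" and "continuous_on {-s..s} g"
  shows "continuous_on UNIV (\<lambda>x. integral {-s..clamp (- s) s x} g)"
proof (rule continuous_on_compose2[OF indefinite_integral_continuous_1])
  show "continuous_on UNIV (clamp (- s) s)" using clamp_continuous_on[of "- s" s id] by simp
qed (use assms clamp_in_Icc[of "- s" s] integrable_continuous_real in auto)

lemma integral_to_clamp_has_real_derivative:
  fixes g :: "real \<Rightarrow> real"
  assumes s: "s > 0" and g: "continuous_on {-s..s} g" and x: "x \<notin> {-s, s}"
  shows "((\<lambda>x. integral {-s..clamp (- s) s x} g) has_real_derivative
           (if x \<in> {-s<..<s} then g x else 0)) (at x)"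
proof -
  consider "x \<in> {-s<..<s}" | "x > s" | "x < -s" using x by force
  then show ?thesis
  proof cases
    case 1
    have "((\<lambda>u. integral {-s..u} g) has_vector_derivative g x) (at x within {-s..s})"
      by (rule integral_has_vector_derivative[OF g]) (use 1 in auto)
    then have "((\<lambda>u. integral {-s..u} g) has_real_derivative g x) (at x)"
      using 1 by (simp add: at_within_Icc_at has_real_derivative_iff_has_vector_derivative)
    then have "((\<lambda>x. integral {-s..clamp (- s) s x} g) has_real_derivative g x) (at x)"
      by (rule has_field_derivative_transform_within_open[where S="{-s<..<s}"])
         (use 1 in \<open>auto simp: clamp_real\<close>)
    then show ?thesis using 1 by simp
  next
    case 2
    then have "((\<lambda>x. integral {-s..clamp (- s) s x} g) has_real_derivative 0) (at x)"
      by (intro has_field_derivative_transform_within_open[OF DERIV_const, where S="{s<..}"])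
         (use s in \<open>auto simp: clamp_real\<close>)
    then show ?thesis using 2 by simp
  next
    case 3
    then have "((\<lambda>x. integral {-s..clamp (- s) s x} g) has_real_derivative 0) (at x)"
      by (intro has_field_derivative_transform_within_open[OF DERIV_const, where S="{..<-s}"])
         (use s in \<open>auto simp: clamp_real\<close>)
    then show ?thesis using 3 by simp
  qed
qed

(* Splitting at x, where |x - y| changes sign, makes the Helmholtz convolution a combination
   of exp(\<plusminus>x/a) with integrals up to x. *)
lemma K1_convolution_eq:
  fixes f :: "real \<Rightarrow> real"
  assumes a: "a > 0" and s: "s > 0" and f: "continuous_on {-s..s} f"
  shows "integral {-s..s} (\<lambda>y. K1 a (x - y) * f y) =
    (exp (- x / a) * integral {-s..clamp (- s) s x} (\<lambda>y. exp (y / a) * f y)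
     + exp (x / a) * (integral {-s..s} (\<lambda>y. exp (- y / a) * f y)
                      - integral {-s..clamp (- s) s x} (\<lambda>y. exp (- y / a) * f y))) / (2 * a)"
proof -
  define c where "c = clamp (- s) s x"
  have c: "-s \<le> c" "c \<le> s" using clamp_in_Icc[of "- s" s x] s unfolding c_def by auto
  have integrable: "(\<lambda>y. K1 a (x - y) * f y) integrable_on {-s..s}"
    "(\<lambda>y. exp (- y / a) * f y) integrable_on {-s..s}"
    unfolding K1_def using a by (auto intro!: integrable_continuous_real continuous_intros f)
  have left: "integral {-s..c} (\<lambda>y. K1 a (x - y) * f y)
      = exp (- x / a) / (2 * a) * integral {-s..c} (\<lambda>y. exp (y / a) * f y)"
  proof (cases "x < -s")
    case True
    then show ?thesis using s by (simp add: c_def clamp_real)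
  next
    case False
    then have "c \<le> x" using s by (simp add: c_def clamp_real)
    then have "K1 a (x - y) * f y = exp (- x / a) / (2 * a) * (exp (y / a) * f y)"
      if "y \<in> {-s..c}" for y
      using that a by (simp add: K1_def abs_of_nonneg field_simps flip: exp_add)
    then have "integral {-s..c} (\<lambda>y. K1 a (x - y) * f y)
        = integral {-s..c} (\<lambda>y. exp (- x / a) / (2 * a) * (exp (y / a) * f y))"
      by (rule integral_cong)
    then show ?thesis by simp
  qed
  have right: "integral {c..s} (\<lambda>y. K1 a (x - y) * f y)
      = exp (x / a) / (2 * a) * integral {c..s} (\<lambda>y. exp (- y / a) * f y)"
  proof (cases "x > s")
    case True
    then show ?thesis using s by (simp add: c_def clamp_real)
  next
    case False
    then have "x \<le> c" using s by (simp add: c_def clamp_real)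
    then have "K1 a (x - y) * f y = exp (x / a) / (2 * a) * (exp (- y / a) * f y)"
      if "y \<in> {c..s}" for y
      using that a by (simp add: K1_def abs_of_nonpos field_simps flip: exp_add)
    then have "integral {c..s} (\<lambda>y. K1 a (x - y) * f y)
        = integral {c..s} (\<lambda>y. exp (x / a) / (2 * a) * (exp (- y / a) * f y))"
      by (rule integral_cong)
    then show ?thesis by simp
  qed
  have "integral {-s..s} (\<lambda>y. K1 a (x - y) * f y)
      = integral {-s..c} (\<lambda>y. K1 a (x - y) * f y) + integral {c..s} (\<lambda>y. K1 a (x - y) * f y)"
    "integral {-s..s} (\<lambda>y. exp (- y / a) * f y)
      = integral {-s..c} (\<lambda>y. exp (- y / a) * f y) + integral {c..s} (\<lambda>y. exp (- y / a) * f y)"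
    using Henstock_Kurzweil_Integration.integral_combine[OF c integrable(1)]
      Henstock_Kurzweil_Integration.integral_combine[OF c integrable(2)] by simp_all
  then show ?thesis
    unfolding c_def[symmetric] left right using a by (simp add: field_simps)
qed

lemma K1_convolution_continuously_differentiable:
  fixes f :: "real \<Rightarrow> real"
  assumes a: "a > 0" and s: "s > 0" and f: "continuous_on {-s..s} f"
  obtains D where "continuous_on UNIV D"
    and "\<And>x. ((\<lambda>x. integral {-s..s} (\<lambda>y. K1 a (x - y) * f y)) has_real_derivative D x) (at x)"
proof -
  define A where "A x = integral {-s..clamp (- s) s x} (\<lambda>y. exp (y / a) * f y)" for x
  define B where "B x = integral {-s..s} (\<lambda>y. exp (- y / a) * f y)
                        - integral {-s..clamp (- s) s x} (\<lambda>y. exp (- y / a) * f y)" for x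
  define P where "P x = (exp (- x / a) * A x + exp (x / a) * B x) / (2 * a)" for x
  define D where "D x = (- exp (- x / a) * A x + exp (x / a) * B x) / (2 * a\<^sup>2)" for x
  have cont: "continuous_on UNIV A" "continuous_on UNIV B"
    unfolding A_def[abs_def] B_def[abs_def] using a s
    by (auto intro!: continuous_intros continuous_on_integral_to_clamp f)
  have "(P has_real_derivative D x) (at x)" for x
  proof (rule has_real_derivative_if_continuous_off_finite[of "{-s, s}"])
    fix x assume x: "x \<notin> {-s, s}"
    define fx where "fx = (if x \<in> {-s<..<s} then f x else 0)"
    have "(A has_real_derivative exp (x / a) * fx) (at x)"
      unfolding A_def[abs_def] fx_def using a
      by (intro DERIV_cong[OF integral_to_clamp_has_real_derivative[OF s _ x]])
         (auto intro!: continuous_intros f)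
    moreover have "(B has_real_derivative - (exp (- x / a) * fx)) (at x)"
      unfolding B_def[abs_def] fx_def using a
      by (intro DERIV_cong[OF DERIV_diff[OF DERIV_const integral_to_clamp_has_real_derivative[OF s _ x]]])
         (auto intro!: continuous_intros f)
    ultimately show "(P has_real_derivative D x) (at x)"
      unfolding P_def[abs_def] D_def using a
      by (auto intro!: derivative_eq_intros
               simp: field_simps power2_eq_square simp flip: exp_add)
  qed (use a cont in \<open>auto simp: P_def[abs_def] D_def[abs_def] intro!: continuous_intros\<close>)
  moreover have "continuous_on UNIV D"
    unfolding D_def[abs_def] using a cont by (auto intro!: continuous_intros)
  moreover have "(\<lambda>x. integral {-s..s} (\<lambda>y. K1 a (x - y) * f y)) = P"
    unfolding P_def A_def B_def using K1_convolution_eq[OF a s f] by auto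
  ultimately show ?thesis using that by simp
qed

definition K2_convolution :: "real \<Rightarrow> real \<Rightarrow> (real \<Rightarrow> real) \<Rightarrow> real \<Rightarrow> real" where
  "K2_convolution a s f x = integral {-s..s} (\<lambda>y. K2 a (x - y) * f y)"

lemma K2_convolution_three_times_differentiable:
  fixes f :: "real \<Rightarrow> real"
  assumes a: "a > 0" and s: "s > 0" and f: "continuous_on {-s..s} f"
  obtains H1 H2 H3 where "\<And>x. (K2_convolution a s f has_real_derivative H1 x) (at x)"
    and "\<And>x. (H1 has_real_derivative H2 x) (at x)"
    and "\<And>x. (H2 has_real_derivative H3 x) (at x)"
    and "continuous_on UNIV H3"
proof -
  define H1 where "H1 x = integral {-s..s} (\<lambda>y. K2_deriv a (x - y) * f y)" for x
  define K1f where "K1f x = integral {-s..s} (\<lambda>y. K1 a (x - y) * f y)" for x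
  obtain D where D: "continuous_on UNIV D" "\<And>x. (K1f has_real_derivative D x) (at x)"
    using K1_convolution_continuously_differentiable[OF a s f] unfolding K1f_def by blast
  have H: "(K2_convolution a s f has_real_derivative H1 x) (at x)" for x
    unfolding K2_convolution_def[abs_def] H1_def
    using a by (intro convolution_has_real_derivative f K2_has_real_derivative
                      continuous_on_K2 continuous_on_K2_deriv)
  have integrable: "(\<lambda>y. K2 a (x - y) * f y) integrable_on {-s..s}"
    "(\<lambda>y. K1 a (x - y) * f y) integrable_on {-s..s}" for x
    using a by (auto intro!: integrable_continuous_real continuous_intros f
                      continuous_on_compose2[OF continuous_on_K2] continuous_on_compose2[OF continuous_on_K1])
  have "(H1 has_real_derivative
          integral {-s..s} (\<lambda>y. (K2 a (x - y) - K1 a (x - y)) / a\<^sup>2 * f y)) (at x)" for x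
    unfolding H1_def using a
    by (intro convolution_has_real_derivative f K2_deriv_has_real_derivative continuous_on_K2_deriv)
       (auto intro!: continuous_intros continuous_on_K1 continuous_on_K2)
  moreover have "integral {-s..s} (\<lambda>y. (K2 a (x - y) - K1 a (x - y)) / a\<^sup>2 * f y)
      = (K2_convolution a s f x - K1f x) / a\<^sup>2" for x
  proof -
    have "integral {-s..s} (\<lambda>y. (K2 a (x - y) - K1 a (x - y)) / a\<^sup>2 * f y)
        = integral {-s..s} (\<lambda>y. (K2 a (x - y) * f y - K1 a (x - y) * f y) * (1 / a\<^sup>2))"
      by (rule integral_cong) (simp add: field_simps)
    then show ?thesis
      unfolding K2_convolution_def K1f_def
      by (simp add: Henstock_Kurzweil_Integration.integral_diff[OF integrable[of x]])
  qed
  ultimately have H1: "(H1 has_real_derivative (K2_convolution a s f x - K1f x) / a\<^sup>2) (at x)" for x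
    using a by simp
  have H2: "((\<lambda>x. (K2_convolution a s f x - K1f x) / a\<^sup>2) has_real_derivative
              (H1 x - D x) / a\<^sup>2) (at x)" for x
    by (intro DERIV_cdivide DERIV_diff H D)
  have "continuous_on UNIV H1"
    using H1 DERIV_isCont continuous_at_imp_continuous_on by blast
  then have "continuous_on UNIV (\<lambda>x. (H1 x - D x) / a\<^sup>2)"
    using D a by (intro continuous_intros) auto
  with H H1 H2 show ?thesis by (rule that)
qed

lemma continuous_on_K2_convolution:
  assumes "a > 0" "s > 0" "continuous_on {-s..s} f"
  shows "continuous_on UNIV (K2_convolution a s f)"
proof -
  obtain H1 where "\<And>x. (K2_convolution a s f has_real_derivative H1 x) (at x)"
    using K2_convolution_three_times_differentiable[OF assms] by metis
  then show ?thesis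
    using DERIV_isCont continuous_at_imp_continuous_on by blast
qed

lemma continuous_on_d3_K2_convolution:
  assumes "a > 0" "s > 0" "continuous_on {-s..s} f"
  shows "continuous_on UNIV (d3 (K2_convolution a s f))"
proof -
  obtain H1 H2 H3 where "\<And>x. (K2_convolution a s f has_real_derivative H1 x) (at x)"
    and "\<And>x. (H1 has_real_derivative H2 x) (at x)"
    and "\<And>x. (H2 has_real_derivative H3 x) (at x)" and "continuous_on UNIV H3"
    using K2_convolution_three_times_differentiable[OF assms] by metis
  then show ?thesis using d3_eq_if_derivatives by metis
qed

lemma K2_convolution_even:
  assumes "\<And>y. y \<in> {-s..s} \<Longrightarrow> f (- y) = f y"
  shows "K2_convolution a s f (- x) = K2_convolution a s f x"
  unfolding K2_convolution_def
  by (rule convolution_even[where k="K2 a" and f=f and s=s]) (auto simp: K2_def assms)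

lemma d3_K2_convolution_odd:
  assumes "a > 0" "s > 0" "continuous_on {-s..s} f"
    and "\<And>y. y \<in> {-s..s} \<Longrightarrow> f (- y) = f y"
  shows "d3 (K2_convolution a s f) (- x) = - d3 (K2_convolution a s f) x"
proof -
  obtain H1 H2 H3 where
    H: "\<And>x. (K2_convolution a s f has_real_derivative H1 x) (at x)"
    and H1: "\<And>x. (H1 has_real_derivative H2 x) (at x)"
    and H2: "\<And>x. (H2 has_real_derivative H3 x) (at x)"
    using K2_convolution_three_times_differentiable[OF assms(1-3)] by metis
  have "H1 (- x) = - H1 x" for x
    by (rule derivative_odd_if_even[OF K2_convolution_even[where f=f and s=s] H]) (rule assms(4))
  then have "H2 (- x) = H2 x" for x
    by (rule derivative_even_if_odd[OF _ H1])
  then have "H3 (- x) = - H3 x"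
    by (rule derivative_odd_if_even[OF _ H2])
  then show ?thesis using d3_eq_if_derivatives[OF H H1 H2] by simp
qed

lemma smoothed_flux_continuous_odd:
  fixes f m :: "real \<Rightarrow> real"
  assumes a: "a > 0" and s: "s > 0" and f: "continuous_on {-s..s} f"
    and even: "\<And>x. x \<in> {-s..s} \<Longrightarrow> f (- x) = f x" and m: "continuous_on UNIV m"
  defines "F \<equiv> \<lambda>x. f x * m (K2_convolution a s f x) * d3 (K2_convolution a s f) x"
  shows "continuous_on {-s..s} F" and "F (- s) = - F s"
proof -
  show "continuous_on {-s..s} F"
    unfolding F_def using a s f
    by (intro continuous_intros continuous_on_compose2[OF m]
          continuous_on_subset[OF continuous_on_K2_convolution]
          continuous_on_subset[OF continuous_on_d3_K2_convolution]) auto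
  show "F (- s) = - F s"
    unfolding F_def using even[of s] K2_convolution_even[where f=f, OF even]
      d3_K2_convolution_odd[where f=f, OF a s f even] s
    by simp
qed

lemma continuous_on_cl_dom_slice:
  assumes "continuous_on cl_dom (\<lambda>q. g (fst q) (snd q))" and "s > 0"
  shows "continuous_on {-s..s} (\<lambda>x. g x s)"
proof -
  have "continuous_on {-s..s} (\<lambda>x. g (fst (x, s)) (snd (x, s)))"
    by (rule continuous_on_compose2[OF assms(1)])
       (use assms(2) in \<open>auto intro!: continuous_intros simp: cl_dom_def\<close>)
  then show ?thesis by simp
qed

lemma continuous_on_cl_dom_scaled_slice:
  assumes "continuous_on cl_dom (\<lambda>q. g (fst q) (snd q))" and "s > 0"
  shows "continuous_on {-1..1} (\<lambda>u. g (s * u) s)"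
proof (rule continuous_on_compose2[OF continuous_on_cl_dom_slice[OF assms]])
  show "(*) s ` {-1..1} \<subseteq> {-s..s}" using assms(2) by simp
qed (auto intro!: continuous_intros)

lemma scaled_point_in_cl_dom:
  assumes "\<sigma> > 0" and "u \<in> {-1..1}"
  shows "(\<sigma> * u, \<sigma>) \<in> cl_dom"
proof -
  have "\<sigma> * \<bar>u\<bar> \<le> \<sigma> * 1" using assms by (intro mult_left_mono) auto
  then show ?thesis using assms by (simp add: cl_dom_def abs_mult)
qed

lemma integral_symmetric_rescale:
  fixes g :: "real \<Rightarrow> real"
  assumes "s > 0"
  shows "integral {-s..s} g = s * integral {-1..1} (\<lambda>u. g (s * u))"
  using integral_stretch_real[where m=s and f=g and a="-s" and b=s] assms by simp

lemma derivative_zero_if_constant_along: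
  assumes "open T" and "t0 \<in> T" and const: "\<And>t. t \<in> T \<Longrightarrow> M (c t) = m"
    and M: "(M has_real_derivative D) (at (c t0))" and c: "(c has_real_derivative v) (at t0)"
    and "v \<noteq> 0"
  shows "D = 0"
proof -
  have "((\<lambda>t. M (c t)) has_real_derivative D * v) (at t0)" by (rule DERIV_chain2[OF M c])
  moreover have "((\<lambda>t. M (c t)) has_real_derivative 0) (at t0)"
    by (rule has_field_derivative_transform_within_open[OF DERIV_const \<open>open T\<close> \<open>t0 \<in> T\<close>])
       (use const in auto)
  ultimately have "D * v = 0" by (rule DERIV_unique)
  then show ?thesis using \<open>v \<noteq> 0\<close> by simp
qed

locale C1_profile =
  fixes \<phi> \<phi>x \<phi>s :: "real \<Rightarrow> real \<Rightarrow> real"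
  assumes has_derivative: "\<forall>p\<in>cl_dom. ((\<lambda>q. \<phi> (fst q) (snd q)) has_derivative
      (\<lambda>v. \<phi>x (fst p) (snd p) * fst v + \<phi>s (fst p) (snd p) * snd v)) (at p within cl_dom)"
    and continuous_x: "continuous_on cl_dom (\<lambda>q. \<phi>x (fst q) (snd q))"
    and continuous_s: "continuous_on cl_dom (\<lambda>q. \<phi>s (fst q) (snd q))"
begin

lemma continuous: "continuous_on cl_dom (\<lambda>q. \<phi> (fst q) (snd q))"
  by (rule has_derivative_continuous_on) (use has_derivative in blast)

lemma continuous_on_rescaled:
  assumes "continuous_on cl_dom (\<lambda>q. g (fst q) (snd q))"
  shows "continuous_on ({0<..} \<times> {-1..1}) (\<lambda>p. g (fst p * snd p) (fst p))"
proof -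
  have "(\<lambda>p. (fst p * snd p, fst p)) ` ({0<..} \<times> {-1..1}) \<subseteq> cl_dom"
    using scaled_point_in_cl_dom by auto
  then have "continuous_on ({0<..} \<times> {-1..1})
      (\<lambda>p. g (fst (fst p * snd p, fst p)) (snd (fst p * snd p, fst p)))"
    by (intro continuous_on_compose2[OF assms]) (auto intro!: continuous_intros)
  then show ?thesis by simp
qed

lemma has_derivative_along:
  assumes "c ` S \<subseteq> cl_dom" and "x \<in> S" and "(c has_derivative c') (at x within S)"
  shows "((\<lambda>x. \<phi> (fst (c x)) (snd (c x))) has_derivative
    (\<lambda>h. \<phi>x (fst (c x)) (snd (c x)) * fst (c' h) + \<phi>s (fst (c x)) (snd (c x)) * snd (c' h)))
    (at x within S)"
  by (rule has_derivative_in_compose2[OF _ assms]) (use has_derivative in blast)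

lemma rescaled_integral_has_real_derivative:
  assumes s: "s > 0"
  shows "((\<lambda>\<sigma>. integral {-1..1} (\<lambda>u. \<phi> (\<sigma> * u) \<sigma>)) has_real_derivative
           integral {-1..1} (\<lambda>u. \<phi>x (s * u) s * u + \<phi>s (s * u) s)) (at s)"
proof -
  have "((\<lambda>\<sigma>. integral (cbox (-1) 1) (\<lambda>u. \<phi> (\<sigma> * u) \<sigma>)) has_field_derivative
          integral (cbox (-1) 1) (\<lambda>u. \<phi>x (s * u) s * u + \<phi>s (s * u) s)) (at s within {0<..})"
  proof (rule leibniz_rule_field_derivative)
    fix \<sigma> u :: real assume \<sigma>: "\<sigma> \<in> {0<..}" and u: "u \<in> cbox (-1) 1"
    have image: "(\<lambda>\<sigma>. (\<sigma> * u, \<sigma>)) ` {0<..} \<subseteq> cl_dom"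
      using scaled_point_in_cl_dom u by auto
    have "((\<lambda>\<sigma>. (\<sigma> * u, \<sigma>)) has_derivative (\<lambda>h. (h * u, h))) (at \<sigma> within {0<..})"
      by (auto intro!: derivative_eq_intros)
    from has_derivative_along[OF image \<sigma> this] have "((\<lambda>\<sigma>. \<phi> (\<sigma> * u) \<sigma>) has_derivative
        (\<lambda>h. \<phi>x (\<sigma> * u) \<sigma> * (h * u) + \<phi>s (\<sigma> * u) \<sigma> * h)) (at \<sigma> within {0<..})"
      by simp
    then show "((\<lambda>\<sigma>. \<phi> (\<sigma> * u) \<sigma>) has_field_derivative \<phi>x (\<sigma> * u) \<sigma> * u + \<phi>s (\<sigma> * u) \<sigma>)
        (at \<sigma> within {0<..})"
      unfolding has_field_derivative_def
      by (auto elim!: has_derivative_eq_rhs simp: fun_eq_iff algebra_simps)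
  next
    fix \<sigma> :: real assume "\<sigma> \<in> {0<..}"
    then have "continuous_on {-1..1} (\<lambda>u. \<phi> (fst (\<sigma> * u, \<sigma>)) (snd (\<sigma> * u, \<sigma>)))"
      using scaled_point_in_cl_dom
      by (intro continuous_on_compose2[OF continuous]) (auto intro!: continuous_intros)
    then show "(\<lambda>u. \<phi> (\<sigma> * u) \<sigma>) integrable_on cbox (-1) 1"
      by (simp add: integrable_continuous_real)
  next
    show "continuous_on ({0<..} \<times> cbox (-1) 1) (\<lambda>(\<sigma>, u). \<phi>x (\<sigma> * u) \<sigma> * u + \<phi>s (\<sigma> * u) \<sigma>)"
      using continuous_on_rescaled[OF continuous_x] continuous_on_rescaled[OF continuous_s]
      by (auto simp: case_prod_beta intro!: continuous_intros)
  qed (use s in auto)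
  then show ?thesis using s by (simp add: at_within_open[of s "{0<..}"])
qed

lemma boundary_term_has_integral:
  assumes s: "s > 0"
  shows "((\<lambda>u. \<phi> (s * u) s + s * u * \<phi>x (s * u) s) has_integral \<phi> s s + \<phi> (- s) s) {-1..1}"
proof -
  have "((\<lambda>u. \<phi> (s * u) s + s * u * \<phi>x (s * u) s) has_integral
      1 * \<phi> (s * 1) s - (-1) * \<phi> (s * (-1)) s) {-1..1}"
  proof (rule fundamental_theorem_of_calculus)
    fix u :: real assume u: "u \<in> {-1..1}"
    have image: "(\<lambda>u. (s * u, s)) ` {-1..1} \<subseteq> cl_dom"
      using scaled_point_in_cl_dom s by auto
    have "((\<lambda>u. (s * u, s)) has_derivative (\<lambda>h. (s * h, 0))) (at u within {-1..1})"
      by (auto intro!: derivative_eq_intros)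
    from has_derivative_along[OF image u this] have "((\<lambda>u. \<phi> (s * u) s) has_derivative
        (\<lambda>h. \<phi>x (s * u) s * (s * h) + \<phi>s (s * u) s * 0)) (at u within {-1..1})"
      by simp
    then have "((\<lambda>u. \<phi> (s * u) s) has_real_derivative \<phi>x (s * u) s * s) (at u within {-1..1})"
      unfolding has_field_derivative_def
      by (auto elim!: has_derivative_eq_rhs simp: fun_eq_iff algebra_simps)
    then have "((\<lambda>u. u * \<phi> (s * u) s) has_real_derivative
        \<phi> (s * u) s + s * u * \<phi>x (s * u) s) (at u within {-1..1})"
      by (auto intro!: derivative_eq_intros simp: algebra_simps)
    then show "((\<lambda>u. u * \<phi> (s * u) s) has_vector_derivative
        \<phi> (s * u) s + s * u * \<phi>x (s * u) s) (at u within {-1..1})"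
      by (simp add: has_real_derivative_iff_has_vector_derivative)
  qed simp
  then show ?thesis by simp
qed

(* Reynolds transport for the symmetric domain [-\<sigma>, \<sigma>], proved by rescaling to [-1, 1]. *)
lemma symmetric_integral_has_real_derivative:
  assumes s: "s > 0"
  shows "((\<lambda>\<sigma>. integral {-\<sigma>..\<sigma>} (\<lambda>x. \<phi> x \<sigma>)) has_real_derivative
           \<phi> s s + \<phi> (- s) s + integral {-s..s} (\<lambda>x. \<phi>s x s)) (at s)"
proof -
  define J where "J \<sigma> = integral {-1..1} (\<lambda>u. \<phi> (\<sigma> * u) \<sigma>)" for \<sigma>
  define J' where "J' = integral {-1..1} (\<lambda>u. \<phi>x (s * u) s * u + \<phi>s (s * u) s)"
  have "(J has_real_derivative J') (at s)"
    unfolding J_def[abs_def] J'_def by (rule rescaled_integral_has_real_derivative[OF s])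
  from DERIV_mult'[OF DERIV_ident this]
  have "((\<lambda>\<sigma>. \<sigma> * J \<sigma>) has_real_derivative J s + s * J') (at s)"
    by (simp add: add.commute)
  then have deriv: "((\<lambda>\<sigma>. integral {-\<sigma>..\<sigma>} (\<lambda>x. \<phi> x \<sigma>)) has_real_derivative J s + s * J') (at s)"
  proof (rule has_field_derivative_transform_within_open[where S="{0<..}"])
    fix \<sigma> :: real assume "\<sigma> \<in> {0<..}"
    then show "\<sigma> * J \<sigma> = integral {-\<sigma>..\<sigma>} (\<lambda>x. \<phi> x \<sigma>)"
      using integral_symmetric_rescale[of \<sigma> "\<lambda>x. \<phi> x \<sigma>"] by (simp add: J_def)
  qed (use s in auto)
  have integrable: "(\<lambda>u. \<phi> (s * u) s) integrable_on {-1..1}"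
    "(\<lambda>u. \<phi>x (s * u) s * u) integrable_on {-1..1}" "(\<lambda>u. \<phi>s (s * u) s) integrable_on {-1..1}"
    using continuous_on_cl_dom_scaled_slice[OF continuous s]
      continuous_on_cl_dom_scaled_slice[OF continuous_x s]
      continuous_on_cl_dom_scaled_slice[OF continuous_s s]
    by (auto intro!: integrable_continuous_real continuous_intros)
  obtain Ix Is where Ix: "((\<lambda>u. \<phi>x (s * u) s * u) has_integral Ix) {-1..1}"
    and Is: "((\<lambda>u. \<phi>s (s * u) s) has_integral Is) {-1..1}"
    using integrable(2,3) unfolding integrable_on_def by blast
  have J: "((\<lambda>u. \<phi> (s * u) s) has_integral J s) {-1..1}"
    unfolding J_def using integrable(1) by (rule integrable_integral)
  have "J' = Ix + Is"
    unfolding J'_def using has_integral_add[OF Ix Is] by (rule integral_unique)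
  moreover have "((\<lambda>u. \<phi> (s * u) s + s * u * \<phi>x (s * u) s) has_integral J s + s * Ix) {-1..1}"
    using has_integral_add[OF J has_integral_mult_right[OF Ix, of s]] by (simp add: algebra_simps)
  then have "J s + s * Ix = \<phi> s s + \<phi> (- s) s"
    using boundary_term_has_integral[OF s] by (rule has_integral_unique)
  moreover have "s * Is = integral {-s..s} (\<lambda>x. \<phi>s x s)"
    using integral_symmetric_rescale[OF s] integral_unique[OF Is] by simp
  ultimately have "J s + s * J' = \<phi> s s + \<phi> (- s) s + integral {-s..s} (\<lambda>x. \<phi>s x s)"
    by (simp add: algebra_simps)
  with deriv show ?thesis by simp
qed

lemma integral_s_if_mass_conserved:
  assumes "open T" and "t0 \<in> T" and pos: "\<forall>t\<in>T. xcl t > 0"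
    and mass: "\<And>t. t \<in> T \<Longrightarrow> integral {- xcl t..xcl t} (\<lambda>x. \<phi> x (xcl t)) = m"
    and xcl: "(xcl has_real_derivative v) (at t0)" and "v \<noteq> 0"
  shows "integral {- xcl t0..xcl t0} (\<lambda>x. \<phi>s x (xcl t0))
           = - \<phi> (xcl t0) (xcl t0) - \<phi> (- xcl t0) (xcl t0)"
proof -
  have "xcl t0 > 0" using pos \<open>t0 \<in> T\<close> by blast
  from derivative_zero_if_constant_along[where M="\<lambda>\<sigma>. integral {-\<sigma>..\<sigma>} (\<lambda>x. \<phi> x \<sigma>)",
      OF \<open>open T\<close> \<open>t0 \<in> T\<close> mass symmetric_integral_has_real_derivative[OF this] xcl \<open>v \<noteq> 0\<close>]
  show ?thesis by simp
qed

end

lemma integral_indicator_Ioo: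
  fixes g :: "real \<Rightarrow> real"
  shows "integral UNIV (\<lambda>x. g x * indicator {a<..<b} x) = integral {a..b} g"
proof -
  have "(\<lambda>x. g x * indicator {a<..<b} x) = (\<lambda>x. if x \<in> {a<..<b} then g x else 0)"
    by (auto simp: indicator_def)
  then show ?thesis by (simp only: integral_restrict_UNIV integral_open_interval_real)
qed

lemma integral_hcl: "integral UNIV (\<lambda>x. hcl \<phi> xcl x t) = integral {- xcl t..xcl t} (\<lambda>x. \<phi> x (xcl t))"
  unfolding hcl_def by (rule integral_indicator_Ioo)

lemma hbar_hcl: "hbar a (hcl \<phi> xcl) x t = K2_convolution a (xcl t) (\<lambda>y. \<phi> y (xcl t)) x"
  unfolding hbar_def hcl_def K2_convolution_def
  using integral_indicator_Ioo[where g="\<lambda>y. K2 a (x - y) * \<phi> y (xcl t)"] by (simp add: mult.assoc)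

lemma integral_derivative_of_odd_at_ends:
  fixes F g :: "real \<Rightarrow> real"
  assumes "s > 0" and F: "continuous_on {-s..s} F" and odd: "F (- s) = - F s"
    and deriv: "\<And>x. x \<in> {-s<..<s} \<Longrightarrow> (F has_real_derivative g x) (at x)"
  shows "integral {-s..s} g = 2 * F s"
proof -
  have "(g has_integral F s - F (- s)) {-s..s}"
    using assms by (intro fundamental_theorem_of_calculus_interior)
                     (auto simp: has_real_derivative_iff_has_vector_derivative)
  then show ?thesis using odd by (simp add: integral_unique)
qed

theorem mainTheorem3:
  fixes \<alpha> \<gamma> \<mu> :: real
    and \<phi> \<phi>x \<phi>s :: "real \<Rightarrow> real \<Rightarrow> real"
    and xcl xd :: "real \<Rightarrow> real"
    and T :: "real set" and t0 :: real
  assumes "\<alpha> > 0" "\<gamma> > 0" "\<mu> > 0"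
    and "open T" "t0 \<in> T"
    and xcl_pos: "\<forall>t\<in>T. xcl t > 0"
    and xcl_deriv: "\<forall>t\<in>T. (xcl has_real_derivative xd t) (at t)"
    and xd_nz: "\<forall>t\<in>T. xd t \<noteq> 0"
    and phi_C1: "\<forall>p\<in>cl_dom. ((\<lambda>q. \<phi> (fst q) (snd q)) has_derivative
                  (\<lambda>v. \<phi>x (fst p) (snd p) * fst v + \<phi>s (fst p) (snd p) * snd v)) (at p within cl_dom)"
    and "continuous_on cl_dom (\<lambda>q. \<phi>x (fst q) (snd q))"
    and "continuous_on cl_dom (\<lambda>q. \<phi>s (fst q) (snd q))"
    and phi_smooth: "\<forall>s>0. \<forall>n. \<forall>x\<in>{-s<..<s}. (deriv ^^ n) (\<lambda>y. \<phi> y s) differentiable (at x)"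
    and phi_even: "\<forall>s>0. \<forall>x. \<bar>x\<bar> \<le> s \<longrightarrow> \<phi> (- x) s = \<phi> x s"
    and mass: "\<exists>M. \<forall>t\<in>T. integral UNIV (\<lambda>x. hcl \<phi> xcl x t) = M"
    and eqn: "\<forall>t\<in>T. \<forall>x\<in>{- xcl t <..< xcl t}.
       ((\<lambda>y. \<phi> y (xcl t) * mob \<gamma> \<mu> (hbar \<alpha> (hcl \<phi> xcl) y t)
               * d3 (\<lambda>z. hbar \<alpha> (hcl \<phi> xcl) z t) y)
        has_real_derivative (- (xd t * \<phi>s x (xcl t)))) (at x)"
    and ext: "\<forall>t\<in>T. \<exists>G. continuous_on {- xcl t .. xcl t} G \<and>
       (\<forall>x\<in>{- xcl t <..< xcl t}. G x = \<phi> x (xcl t) * mob \<gamma> \<mu> (hbar \<alpha> (hcl \<phi> xcl) x t)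
               * d3 (\<lambda>z. hbar \<alpha> (hcl \<phi> xcl) z t) x)"
    and "\<phi> (xcl t0) (xcl t0) \<noteq> 0"
  shows "xd t0 = mob \<gamma> \<mu> (hbar \<alpha> (hcl \<phi> xcl) (xcl t0) t0)
                 * d3 (\<lambda>z. hbar \<alpha> (hcl \<phi> xcl) z t0) (xcl t0)"
proof -
  interpret C1_profile \<phi> \<phi>x \<phi>s using phi_C1 assms(10,11) by unfold_locales
  define s where "s = xcl t0"
  have s: "s > 0" using xcl_pos \<open>t0 \<in> T\<close> unfolding s_def by blast
  define f where "f x = \<phi> x s" for x
  define H where "H = K2_convolution \<alpha> s f"
  define F where "F x = f x * mob \<gamma> \<mu> (H x) * d3 H x" for x
  have f: "continuous_on {-s..s} f" unfolding f_def by (rule continuous_on_cl_dom_slice[OF continuous s])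
  have f_even: "\<And>x. x \<in> {-s..s} \<Longrightarrow> f (- x) = f x" unfolding f_def using phi_even s by auto
  have hbar_eq: "hbar \<alpha> (hcl \<phi> xcl) z t0 = H z" for z
    unfolding H_def f_def s_def by (rule hbar_hcl)
  have "continuous_on UNIV (mob \<gamma> \<mu>)" unfolding mob_def[abs_def] by (intro continuous_intros)
  then have "continuous_on {-s..s} F" "F (- s) = - F s"
    using smoothed_flux_continuous_odd[OF \<open>\<alpha> > 0\<close> s f f_even] unfolding F_def H_def by auto
  moreover have "(F has_real_derivative - (xd t0 * \<phi>s x s)) (at x)" if "x \<in> {-s<..<s}" for x
    using bspec[OF bspec[OF eqn \<open>t0 \<in> T\<close>]] that
    unfolding s_def[symmetric] F_def[abs_def] f_def by (simp only: hbar_eq)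
  ultimately have flux: "integral {-s..s} (\<lambda>x. - (xd t0 * \<phi>s x s)) = 2 * F s"
    by (rule integral_derivative_of_odd_at_ends[OF s])
  obtain m where m: "\<And>t. t \<in> T \<Longrightarrow> integral {- xcl t..xcl t} (\<lambda>x. \<phi> x (xcl t)) = m"
    using mass unfolding integral_hcl by blast
  have "integral {-s..s} (\<lambda>x. \<phi>s x s) = - 2 * \<phi> s s"
    using integral_s_if_mass_conserved[OF \<open>open T\<close> \<open>t0 \<in> T\<close> xcl_pos m
        bspec[OF xcl_deriv \<open>t0 \<in> T\<close>] bspec[OF xd_nz \<open>t0 \<in> T\<close>]] phi_even s
    unfolding s_def by simp
  with flux have "F s = xd t0 * \<phi> s s" by simp
  then show ?thesis
    using \<open>\<phi> (xcl t0) (xcl t0) \<noteq> 0\<close> unfolding hbar_eq s_def[symmetric] F_def f_def H_def by simp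
qed

end
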